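(* Let $\Upsilon$ be a tree and let $\|\cdot\|$ be an equivalent strictly convex norm on $C_0(\Upsilon)$. Then the associated function $\mu(t)=\inf\{\|\mathbf{1}_{(0,t]}+f'\|: f'\in C_0(\Upsilon),\ \operatorname{supp}f'\subseteq(t,\infty)\}$ is constant on no ever-branching subset of $\Upsilon$.
   Context: A tree is a partially ordered set $(\Upsilon,\preceq)$ such that for each $t$ the set $(0,t]=\{s:s\preceq t\}$ is well-ordered; write $(0,t)=\{s:s\prec t\}$, $[t,\infty)=\{u:t\preceq u\}$, $(t,\infty)=\{u:t\prec u\}$, and let $r(t)$ be the order type of $(0,t)$. Trees are assumed Hausdorff: if $r(t)$ is a limit ordinal and $(0,t)=(0,t')$ then $t=t'$. $\Upsilon$ carries the coarsest topology in which every $(0,t]$ is open and closed, and $C_0(\Upsilon)$ is the space of continuous $f:\Upsilon\to\mathbb{R}$ with $\{|f|\ge\epsilon\}$ compact for every $\epsilon>0$, with the supremum norm; $\operatorname{supp}f=\{s:f(s)\ne0\}$. A subset $\Gamma\subseteq\Upsilon$ is ever-branching if it is non-empty and for every $t\in\Gamma$ the set $\Gamma\cap[t,\infty)$ is not totally ordered. A norm is strictly convex if $\|x\|=\|y\|=\tfrac12\|x+y\|$ implies $x=y$. *)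

theory Defs
  imports "HOL-Analysis.Analysis"
begin

definition below :: "'a::order \<Rightarrow> 'a set" where
  "below t = {s. s \<le> t}"

definition strictly_below :: "'a::order \<Rightarrow> 'a set" where
  "strictly_below t = {s. s < t}"

definition above :: "'a::order \<Rightarrow> 'a set" where
  "above t = {u. t \<le> u}"

definition strictly_above :: "'a::order \<Rightarrow> 'a set" where
  "strictly_above t = {u. t < u}"

definition totally_ordered :: "'a::order set \<Rightarrow> bool" where
  "totally_ordered A \<longleftrightarrow> (\<forall>x\<in>A. \<forall>y\<in>A. x \<le> y \<or> y \<le> x)"

definition well_ordered_set :: "'a::order set \<Rightarrow> bool" where
  "well_ordered_set A \<longleftrightarrow> totally_ordered A \<and>
     (\<forall>B. B \<subseteq> A \<and> B \<noteq> {} \<longrightarrow> (\<exists>m\<in>B. \<forall>b\<in>B. m \<le> b))"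

text \<open>The order type of (0,t) is a limit ordinal iff (0,t) is nonempty and has no maximum.\<close>
definition limit_height :: "'a::order \<Rightarrow> bool" where
  "limit_height t \<longleftrightarrow> strictly_below t \<noteq> {} \<and>
     \<not> (\<exists>m\<in>strictly_below t. \<forall>s\<in>strictly_below t. s \<le> m)"

definition is_tree :: "'a::order itself \<Rightarrow> bool" where
  "is_tree _ \<longleftrightarrow> (\<forall>t::'a. well_ordered_set (below t)) \<and>
     (\<forall>t t'::'a. limit_height t \<and> strictly_below t = strictly_below t' \<longrightarrow> t = t')"

definition tree_topology :: "'a::order topology" where
  "tree_topology = topology_generated_by (range below \<union> range (\<lambda>t. - below t))"

definition C0 :: "('a::order \<Rightarrow> real) set" where
  "C0 = {f. continuous_map tree_topology euclideanreal f \<and>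
            (\<forall>\<epsilon>>0. compactin tree_topology {s. \<bar>f s\<bar> \<ge> \<epsilon>})}"

definition supp :: "('a \<Rightarrow> real) \<Rightarrow> 'a set" where
  "supp f = {s. f s \<noteq> 0}"

definition sup_norm :: "('a \<Rightarrow> real) \<Rightarrow> real" where
  "sup_norm f = (SUP s. \<bar>f s\<bar>)"

text \<open>A norm on C0 (values of N outside C0 are irrelevant).\<close>
definition norm_on_C0 :: "(('a::order \<Rightarrow> real) \<Rightarrow> real) \<Rightarrow> bool" where
  "norm_on_C0 N \<longleftrightarrow>
     (\<forall>f\<in>C0. N f \<ge> 0 \<and> (N f = 0 \<longleftrightarrow> f = (\<lambda>_. 0))) \<and>
     (\<forall>f\<in>C0. \<forall>c::real. N (\<lambda>s. c * f s) = \<bar>c\<bar> * N f) \<and>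
     (\<forall>f\<in>C0. \<forall>g\<in>C0. N (\<lambda>s. f s + g s) \<le> N f + N g)"

definition equivalent_norm_on_C0 :: "(('a::order \<Rightarrow> real) \<Rightarrow> real) \<Rightarrow> bool" where
  "equivalent_norm_on_C0 N \<longleftrightarrow> norm_on_C0 N \<and>
     (\<exists>a b. 0 < a \<and> 0 < b \<and> (\<forall>f\<in>C0. a * sup_norm f \<le> N f \<and> N f \<le> b * sup_norm f))"

definition strictly_convex_on_C0 :: "(('a::order \<Rightarrow> real) \<Rightarrow> real) \<Rightarrow> bool" where
  "strictly_convex_on_C0 N \<longleftrightarrow>
     (\<forall>x\<in>C0. \<forall>y\<in>C0. N x = N y \<and> N y = N (\<lambda>s. x s + y s) / 2 \<longrightarrow> x = y)"

definition mu :: "(('a::order \<Rightarrow> real) \<Rightarrow> real) \<Rightarrow> 'a \<Rightarrow> real" where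
  "mu N t = Inf {N (\<lambda>s. indicator (below t) s + f' s) | f'. f' \<in> C0 \<and> supp f' \<subseteq> strictly_above t}"

definition ever_branching :: "'a::order set \<Rightarrow> bool" where
  "ever_branching \<Gamma> \<longleftrightarrow> \<Gamma> \<noteq> {} \<and> (\<forall>t\<in>\<Gamma>. \<not> totally_ordered (\<Gamma> \<inter> above t))"

end

theory Submission
  imports Defs
begin

text \<open>If \<open>\<mu>\<close> were constant, say \<open>c\<close>, on an ever-branching \<open>\<Gamma>\<close>, the infimum defining
  \<open>\<mu>(t)\<close> would be attained at every \<open>t \<in> \<Gamma>\<close>. Indeed, choose inside \<open>\<Gamma>\<close> a binary subtree
  rooted at \<open>t\<close> and let \<open>X\<^sub>t(r)\<close> be the probability that a random branch of it passes
  through \<open>r\<close>. Then \<open>X\<^sub>t\<close> is admissible at \<open>t\<close>, and averaging near-optimal admissible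
  functions over the \<open>2\<^sup>K\<close> nodes of depth \<open>K\<close> gives functions of norm close to \<open>c\<close>
  converging uniformly to \<open>X\<^sub>t\<close>; hence \<open>\<parallel>X\<^sub>t\<parallel> = c\<close>. For a child \<open>l\<close> of \<open>t\<close> in the
  subtree, the midpoint of \<open>X\<^sub>t\<close> and \<open>X\<^sub>l\<close> is admissible at \<open>t\<close>, so its norm is at
  least \<open>c\<close>, and strict convexity forces \<open>X\<^sub>t = X\<^sub>l\<close>. This is impossible, since
  \<open>X\<^sub>t(l) \<le> 1/2\<close> while \<open>X\<^sub>l(l) = 1\<close>.\<close>

section \<open>Compactness of the branches of a tree\<close>

lemma topspace_tree_topology [simp]: "topspace (tree_topology :: 'a::order topology) = UNIV"
  unfolding tree_topology_def by (auto simp: below_def)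

lemma openin_below: "openin tree_topology (below t)"
  unfolding tree_topology_def by (rule topology_generated_by_Basis) auto

lemma openin_Compl_below: "openin tree_topology (- below t)"
  unfolding tree_topology_def by (rule topology_generated_by_Basis) auto

lemma tree_below_comparable:
  assumes "is_tree TYPE('a::order)" "(s::'a) \<le> t" "r \<le> t"
  shows "s \<le> r \<or> r \<le> s"
  using assms unfolding is_tree_def well_ordered_set_def totally_ordered_def below_def by auto

lemma tree_below_has_least:
  assumes "is_tree TYPE('a::order)" "B \<subseteq> below (t::'a)" "b \<in> B"
  shows "\<exists>m\<in>B. \<forall>x\<in>B. m \<le> x"
  using assms unfolding is_tree_def well_ordered_set_def by blast

lemma tree_first_divergence:
  assumes tree: "is_tree TYPE('a::order)" and "\<not> r \<le> (s::'a)"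
  obtains p where "p \<le> r" "\<not> p \<le> s" "strictly_below p = below r \<inter> below s"
proof -
  have "{x. x \<le> r \<and> \<not> x \<le> s} \<subseteq> below r" by (auto simp: below_def)
  from tree_below_has_least[OF tree this, of r] assms(2)
  obtain p where p: "p \<le> r" "\<not> p \<le> s" and least: "\<And>x. x \<le> r \<Longrightarrow> \<not> x \<le> s \<Longrightarrow> p \<le> x"
    by auto
  have "strictly_below p = below r \<inter> below s"
  proof (intro set_eqI iffI)
    fix x assume "x \<in> strictly_below p"
    then show "x \<in> below r \<inter> below s"
      using p least[of x] by (force simp: strictly_below_def below_def)
  next
    fix x assume "x \<in> below r \<inter> below s"
    then have "x \<le> r" "x \<le> s" by (auto simp: below_def)
    then show "x \<in> strictly_below p"
      using tree_below_comparable[OF tree \<open>x \<le> r\<close> p(1)] p(2)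
      by (auto simp: strictly_below_def order.order_iff_strict dest: order_trans)
  qed
  with p show thesis by (rule that)
qed

definition contains_branch_tail :: "'a::order set \<Rightarrow> 'a \<Rightarrow> bool" where
  "contains_branch_tail U r \<longleftrightarrow> (\<exists>q<r. {q<..r} \<subseteq> U) \<or> below r \<subseteq> U"

lemma contains_branch_tail_Compl_below:
  assumes tree: "is_tree TYPE('a::order)" and "\<not> r \<le> (s::'a)"
  shows "contains_branch_tail (- below s) r"
proof -
  let ?J = "below r \<inter> below s"
  consider "?J = {}" | q where "q \<in> ?J" "\<forall>x\<in>?J. x \<le> q" | "?J \<noteq> {}" "\<not> (\<exists>q\<in>?J. \<forall>x\<in>?J. x \<le> q)"
    by blast
  then show ?thesis
  proof cases
    case 1
    then show ?thesis unfolding contains_branch_tail_def by blast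
  next
    case 2
    then have "q < r" using assms(2) by (auto simp: below_def order.order_iff_strict)
    moreover have "{q<..r} \<subseteq> - below s" using 2 by (force simp: below_def)
    ultimately show ?thesis unfolding contains_branch_tail_def by blast
  next
    case 3
    \<comment> \<open>Both branches leave \<open>?J\<close> at a point of limit height; by the Hausdorff property these
      points coincide, although one lies below \<open>s\<close> and the other does not.\<close>
    then have "\<not> s \<le> r" by (auto simp: below_def)
    obtain p where p: "p \<le> r" "\<not> p \<le> s" "strictly_below p = ?J"
      using tree_first_divergence[OF tree assms(2)] .
    obtain p' where p': "p' \<le> s" "strictly_below p' = below s \<inter> below r"
      using tree_first_divergence[OF tree \<open>\<not> s \<le> r\<close>] .
    have "limit_height p" unfolding limit_height_def p(3) using 3 by blast
    then have "p = p'" using tree p(3) p'(2) unfolding is_tree_def by (metis Int_commute)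
    with p(2) p'(1) show ?thesis by blast
  qed
qed

lemma openin_imp_contains_branch_tail:
  assumes tree: "is_tree TYPE('a::order)" and U: "openin tree_topology (U::'a set)" and "r \<in> U"
  shows "contains_branch_tail U r"
proof -
  have "generate_topology_on (range below \<union> range (\<lambda>t. - below t)) U"
    using U unfolding tree_topology_def by (rule openin_topology_generated_by)
  then show ?thesis using \<open>r \<in> U\<close>
  proof (induction arbitrary: r)
    case Empty
    then show ?case by simp
  next
    case (Int a b)
    have tail_below: "{q<..r} \<subseteq> below r" for q by (auto simp: below_def)
    from Int have "contains_branch_tail a r" "contains_branch_tail b r" by auto
    then show ?case
      unfolding contains_branch_tail_def
    proof (elim disjE exE conjE)
      fix q1 q2 assume "q1 < r" "{q1<..r} \<subseteq> a" "q2 < r" "{q2<..r} \<subseteq> b"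
      moreover have "q1 \<le> q2 \<or> q2 \<le> q1"
        using tree_below_comparable[OF tree, of q1 r q2] \<open>q1 < r\<close> \<open>q2 < r\<close> by auto
      moreover have "{q2<..r} \<subseteq> {q1<..r}" if "q1 \<le> q2"
        using that by (auto intro: order.strict_trans1)
      moreover have "{q1<..r} \<subseteq> {q2<..r}" if "q2 \<le> q1"
        using that by (auto intro: order.strict_trans1)
      ultimately have "{q2<..r} \<subseteq> a \<inter> b \<or> {q1<..r} \<subseteq> a \<inter> b"
        by blast
      with \<open>q1 < r\<close> \<open>q2 < r\<close> show "(\<exists>q<r. {q<..r} \<subseteq> a \<inter> b) \<or> below r \<subseteq> a \<inter> b"
        by blast
    qed (use tail_below in blast)+
  next
    case (UN K)
    then obtain k where "k \<in> K" "r \<in> k" "contains_branch_tail k r" by blast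
    then show ?case unfolding contains_branch_tail_def by blast
  next
    case (Basis s)
    then show ?case
      using contains_branch_tail_Compl_below[OF tree]
      by (auto simp: contains_branch_tail_def below_def)
  qed
qed

text \<open>If \<open>(0, t]\<close> had no finite subcover, consider the least \<open>r \<le> t\<close> for which \<open>(0, r]\<close> has
  none; a cover member at \<open>r\<close> contains a tail \<open>(q, r]\<close>, and \<open>(0, q]\<close> is finitely covered.\<close>
lemma compactin_below:
  assumes tree: "is_tree TYPE('a::order)"
  shows "compactin tree_topology (below (t::'a))"
  unfolding compactin_def
proof (intro conjI allI impI)
  fix \<U> assume \<U>: "(\<forall>U\<in>\<U>. openin tree_topology U) \<and> below t \<subseteq> \<Union>\<U>"
  let ?finitely_covered = "\<lambda>r. \<exists>\<F>. finite \<F> \<and> \<F> \<subseteq> \<U> \<and> below r \<subseteq> \<Union>\<F>"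
  have "?finitely_covered r" if "r \<le> t" for r
  proof (rule ccontr)
    assume "\<not> ?finitely_covered r"
    let ?B = "{x. x \<le> t \<and> \<not> ?finitely_covered x}"
    have "?B \<subseteq> below t" by (auto simp: below_def)
    moreover have "r \<in> ?B" using that \<open>\<not> ?finitely_covered r\<close> by simp
    ultimately have "\<exists>m\<in>?B. \<forall>x\<in>?B. m \<le> x" by (rule tree_below_has_least[OF tree])
    then obtain m where "m \<in> ?B" and least: "\<forall>x\<in>?B. m \<le> x" ..
    then have m: "m \<le> t" "\<not> ?finitely_covered m" by simp_all
    obtain V where V: "V \<in> \<U>" "m \<in> V" using \<U> m(1) by (auto simp: below_def)
    then have "contains_branch_tail V m" using \<U> openin_imp_contains_branch_tail[OF tree] by blast
    then show False unfolding contains_branch_tail_def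
    proof (elim disjE exE conjE)
      fix q assume q: "q < m" "{q<..m} \<subseteq> V"
      have "q \<le> t" using less_le_trans[OF q(1) m(1)] by (rule less_imp_le)
      moreover have "\<not> m \<le> q" using q(1) less_le_not_le by blast
      ultimately have "?finitely_covered q" using least by auto
      then obtain \<F> where \<F>: "finite \<F>" "\<F> \<subseteq> \<U>" "below q \<subseteq> \<Union>\<F>"
        by blast
      have "below m \<subseteq> below q \<union> {q<..m}"
      proof
        fix x assume "x \<in> below m"
        then have "x \<le> m" by (simp add: below_def)
        then have "x \<le> q \<or> q < x"
          using tree_below_comparable[OF tree _ order_less_imp_le[OF q(1)]]
          by (auto simp: order.order_iff_strict)
        with \<open>x \<le> m\<close> show "x \<in> below q \<union> {q<..m}" by (auto simp: below_def)
      qed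
      then have "below m \<subseteq> \<Union>(insert V \<F>)" using \<F>(3) q(2) by blast
      then have "?finitely_covered m" using \<F>(1,2) V(1) by (intro exI[of _ "insert V \<F>"]) simp
      with m(2) show False by contradiction
    next
      assume "below m \<subseteq> V"
      then have "?finitely_covered m" using V(1) by (intro exI[of _ "{V}"]) simp
      with m(2) show False by contradiction
    qed
  qed
  then show "\<exists>\<F>. finite \<F> \<and> \<F> \<subseteq> \<U> \<and> below t \<subseteq> \<Union>\<F>" by blast
qed simp

section \<open>The space \<open>C\<^sub>0\<close>\<close>

lemma closedin_abs_ge:
  assumes "continuous_map tree_topology euclideanreal f"
  shows "closedin tree_topology {s. e \<le> \<bar>f s\<bar>}"
proof -
  have "closed {y::real. e \<le> \<bar>y\<bar>}" by (intro closed_Collect_le continuous_intros)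
  then show ?thesis using closedin_continuous_map_preimage[OF assms, of "{y. e \<le> \<bar>y\<bar>}"] by simp
qed

lemma C0I:
  assumes "continuous_map tree_topology euclideanreal f"
    and "\<And>e. e > 0 \<Longrightarrow> \<exists>K. compactin tree_topology K \<and> {s. e \<le> \<bar>f s\<bar>} \<subseteq> K"
  shows "f \<in> C0"
  unfolding C0_def
proof (intro CollectI conjI allI impI assms(1))
  fix e :: real assume "e > 0"
  then obtain K where "compactin tree_topology K" "{s. e \<le> \<bar>f s\<bar>} \<subseteq> K" using assms(2) by blast
  then show "compactin tree_topology {s. e \<le> \<bar>f s\<bar>}"
    using closed_compactin closedin_abs_ge[OF assms(1)] by blast
qed

lemma C0_continuous: "f \<in> C0 \<Longrightarrow> continuous_map tree_topology euclideanreal f"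
  by (simp add: C0_def)

lemma C0_compactin_abs_ge: "f \<in> C0 \<Longrightarrow> e > 0 \<Longrightarrow> compactin tree_topology {s. e \<le> \<bar>f s\<bar>}"
  by (simp add: C0_def)

lemma C0_bounded:
  assumes "f \<in> C0"
  shows "\<exists>B. \<forall>s. \<bar>f s\<bar> \<le> B"
proof -
  have "compactin euclideanreal (f ` {s. 1 \<le> \<bar>f s\<bar>})"
    using image_compactin[OF C0_compactin_abs_ge[OF assms, of 1] C0_continuous[OF assms]] by simp
  then have "bounded (f ` {s. 1 \<le> \<bar>f s\<bar>})" by (simp add: compact_imp_bounded)
  then obtain B where B: "\<forall>y\<in>f ` {s. 1 \<le> \<bar>f s\<bar>}. \<bar>y\<bar> \<le> B" unfolding bounded_iff by auto
  have "\<bar>f s\<bar> \<le> max B 1" for s using B by (cases "1 \<le> \<bar>f s\<bar>") force+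
  then show ?thesis by blast
qed

lemma abs_le_sup_norm:
  assumes "f \<in> C0"
  shows "\<bar>f s\<bar> \<le> sup_norm f"
proof -
  obtain B where "\<forall>s. \<bar>f s\<bar> \<le> B" using C0_bounded[OF assms] ..
  then have "bdd_above (range (\<lambda>s. \<bar>f s\<bar>))" by (auto intro: bdd_aboveI)
  then show ?thesis unfolding sup_norm_def by (rule cSUP_upper[OF UNIV_I])
qed

lemma sup_norm_le:
  assumes "\<And>s. \<bar>f s\<bar> \<le> B"
  shows "sup_norm f \<le> B"
  unfolding sup_norm_def by (rule cSUP_least) (auto intro: assms)

lemma C0_zero: "(\<lambda>s. 0) \<in> C0"
  by (rule C0I) (auto intro: exI[of _ "{}"])

lemma C0_add:
  assumes "f \<in> C0" "g \<in> C0"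
  shows "(\<lambda>s. f s + g s) \<in> C0"
proof (rule C0I)
  show "continuous_map tree_topology euclideanreal (\<lambda>s. f s + g s)"
    using C0_continuous[OF assms(1)] C0_continuous[OF assms(2)] by (rule continuous_map_add)
next
  fix e :: real assume "e > 0"
  then have "compactin tree_topology ({s. e/2 \<le> \<bar>f s\<bar>} \<union> {s. e/2 \<le> \<bar>g s\<bar>})"
    using assms by (intro compactin_Un C0_compactin_abs_ge) auto
  moreover have "{s. e \<le> \<bar>f s + g s\<bar>} \<subseteq> {s. e/2 \<le> \<bar>f s\<bar>} \<union> {s. e/2 \<le> \<bar>g s\<bar>}" by auto
  ultimately show "\<exists>K. compactin tree_topology K \<and> {s. e \<le> \<bar>f s + g s\<bar>} \<subseteq> K" by blast
qed

lemma C0_scale: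
  assumes "f \<in> C0"
  shows "(\<lambda>s. c * f s) \<in> C0"
proof (rule C0I)
  show "continuous_map tree_topology euclideanreal (\<lambda>s. c * f s)"
    using C0_continuous[OF assms] by (rule continuous_map_real_mult_left)
next
  fix e :: real assume "e > 0"
  show "\<exists>K. compactin tree_topology K \<and> {s. e \<le> \<bar>c * f s\<bar>} \<subseteq> K"
  proof (cases "c = 0")
    case True
    with \<open>e > 0\<close> show ?thesis by (intro exI[of _ "{}"]) auto
  next
    case False
    then have "{s. e \<le> \<bar>c * f s\<bar>} \<subseteq> {s. e / \<bar>c\<bar> \<le> \<bar>f s\<bar>}"
      by (auto simp: abs_mult divide_le_eq mult.commute)
    with C0_compactin_abs_ge[OF assms, of "e / \<bar>c\<bar>"] False \<open>e > 0\<close> show ?thesis by auto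
  qed
qed

lemma C0_diff:
  assumes "f \<in> C0" "g \<in> C0"
  shows "(\<lambda>s. f s - g s) \<in> C0"
  using C0_add[OF assms(1) C0_scale[OF assms(2), of "-1"]] by simp

lemma C0_sum:
  assumes "\<And>i. i \<in> I \<Longrightarrow> f i \<in> C0"
  shows "(\<lambda>s. \<Sum>i\<in>I. f i s) \<in> C0"
  using assms
proof (induction I rule: infinite_finite_induct)
  case (insert i I)
  then show ?case using C0_add[of "f i" "\<lambda>s. \<Sum>i\<in>I. f i s"] by simp
qed (simp_all add: C0_zero)

lemma C0_indicator_below:
  assumes tree: "is_tree TYPE('a::order)"
  shows "indicator (below (t::'a)) \<in> C0"
proof (rule C0I)
  show "continuous_map tree_topology euclideanreal (indicator (below t) :: 'a \<Rightarrow> real)"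
    unfolding continuous_map_openin_preimage_eq
  proof (intro conjI allI impI)
    fix U :: "real set"
    have "indicator (below t) -` U =
        (if (1::real) \<in> U then below t else {}) \<union> (if (0::real) \<in> U then - below t else {})"
      by (auto simp: indicator_def of_bool_def split: if_splits)
    then show "openin tree_topology (topspace tree_topology \<inter> indicator (below t) -` U)"
      using openin_below openin_Compl_below openin_topspace[of tree_topology] by auto
  qed auto
next
  fix e :: real assume "e > 0"
  then have "{s. e \<le> \<bar>indicator (below t) s :: real\<bar>} \<subseteq> below t" by (auto simp: indicator_def)
  with compactin_below[OF tree]
  show "\<exists>K. compactin tree_topology K \<and> {s. e \<le> \<bar>indicator (below t) s :: real\<bar>} \<subseteq> K" by blast
qed

lemma C0_uniform_limit:
  assumes "\<And>n. h n \<in> C0" and "uniform_limit UNIV h g sequentially"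
  shows "g \<in> C0"
proof (rule C0I)
  have "continuous_map tree_topology Met_TC.mtopology g"
  proof (rule Met_TC.continuous_map_uniform_limit[where F=sequentially and f=h])
    show "\<forall>\<^sub>F n in sequentially. continuous_map tree_topology Met_TC.mtopology (h n)"
      using C0_continuous[OF assms(1)] by simp
  qed (use assms(2) in \<open>auto simp: uniform_limit_iff\<close>)
  then show "continuous_map tree_topology euclideanreal g" by simp
next
  fix e :: real assume "e > 0"
  then have "\<forall>\<^sub>F n in sequentially. \<forall>s. \<bar>h n s - g s\<bar> < e/2"
    using uniform_limitD[OF assms(2), of "e/2"] by (simp add: dist_real_def)
  then obtain n where "\<forall>m\<ge>n. \<forall>s. \<bar>h m s - g s\<bar> < e/2"
    unfolding eventually_sequentially ..
  then have n: "\<bar>h n s - g s\<bar> < e/2" for s by blast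
  have "{s. e \<le> \<bar>g s\<bar>} \<subseteq> {s. e/2 \<le> \<bar>h n s\<bar>}"
  proof
    fix s assume "s \<in> {s. e \<le> \<bar>g s\<bar>}"
    moreover have "\<bar>g s\<bar> \<le> \<bar>h n s\<bar> + \<bar>h n s - g s\<bar>" by arith
    ultimately show "s \<in> {s. e/2 \<le> \<bar>h n s\<bar>}" using n[of s] by auto
  qed
  with C0_compactin_abs_ge[OF assms(1)[of n], of "e/2"] \<open>e > 0\<close>
  show "\<exists>K. compactin tree_topology K \<and> {s. e \<le> \<bar>g s\<bar>} \<subseteq> K" by auto
qed

section \<open>Admissible functions\<close>

definition admissible :: "'a::order \<Rightarrow> ('a \<Rightarrow> real) \<Rightarrow> bool" where
  "admissible t h \<longleftrightarrow> h \<in> C0 \<and> (\<forall>r\<le>t. h r = 1) \<and> (\<forall>r. \<not> r \<le> t \<and> \<not> t < r \<longrightarrow> h r = 0)"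

lemma mu_eq_Inf_admissible:
  assumes tree: "is_tree TYPE('a::order)"
  shows "mu N (t::'a) = Inf (N ` {h. admissible t h})"
proof -
  have "{N (\<lambda>s. indicator (below t) s + f s) | f. f \<in> C0 \<and> supp f \<subseteq> strictly_above t}
      = N ` {h. admissible t h}"
  proof (intro equalityI subsetI)
    fix v assume "v \<in> {N (\<lambda>s. indicator (below t) s + f s) | f. f \<in> C0 \<and> supp f \<subseteq> strictly_above t}"
    then obtain f where f: "f \<in> C0" "supp f \<subseteq> strictly_above t"
      and v: "v = N (\<lambda>s. indicator (below t) s + f s)" by blast
    have "admissible t (\<lambda>s. indicator (below t) s + f s)"
      using f C0_add[OF C0_indicator_below[OF tree] f(1)]
      by (auto simp: admissible_def supp_def strictly_above_def below_def subset_iff)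
    with v show "v \<in> N ` {h. admissible t h}" by blast
  next
    fix v assume "v \<in> N ` {h. admissible t h}"
    then obtain h where h: "admissible t h" and v: "v = N h" by blast
    let ?f = "\<lambda>s. h s - indicator (below t) s"
    have "?f \<in> C0" using h C0_diff C0_indicator_below[OF tree] by (auto simp: admissible_def)
    moreover have "supp ?f \<subseteq> strictly_above t"
      using h by (auto simp: admissible_def supp_def strictly_above_def below_def indicator_def)
    ultimately show "v \<in> {N (\<lambda>s. indicator (below t) s + f s) | f. f \<in> C0 \<and> supp f \<subseteq> strictly_above t}"
      unfolding v by (intro CollectI exI[of _ ?f]) simp
  qed
  then show ?thesis by (simp add: mu_def)
qed

lemma admissible_indicator_below:
  assumes tree: "is_tree TYPE('a::order)"
  shows "admissible (t::'a) (indicator (below t))"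
  using C0_indicator_below[OF tree] by (auto simp: admissible_def below_def)

lemma admissible_midpoint:
  assumes tree: "is_tree TYPE('a::order)"
    and x: "admissible (t::'a) x" and y: "admissible u y" and "t \<le> u"
  shows "admissible t (\<lambda>s. (x s + y s) / 2)"
  unfolding admissible_def
proof (intro conjI allI impI)
  show "(\<lambda>s. (x s + y s) / 2) \<in> C0"
    using C0_scale[OF C0_add, of x y "1/2"] x y by (simp add: admissible_def)
next
  fix r assume "r \<le> t"
  with x y \<open>t \<le> u\<close> show "(x r + y r) / 2 = 1" by (auto simp: admissible_def dest: order_trans)
next
  fix r assume r: "\<not> r \<le> t \<and> \<not> t < r"
  have "\<not> r \<le> u"
  proof
    assume "r \<le> u"
    with tree_below_comparable[OF tree this \<open>t \<le> u\<close>] r show False by (auto simp: order.order_iff_strict)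
  qed
  moreover have "\<not> u < r" using r \<open>t \<le> u\<close> by (auto dest: order_le_less_trans)
  ultimately show "(x r + y r) / 2 = 0" using x y r by (simp add: admissible_def)
qed

section \<open>Binary subtrees of an ever-branching set\<close>

lemma abs_sum_le_if_at_most_one_nonzero:
  fixes f :: "'b \<Rightarrow> real"
  assumes "finite I" and unique: "\<And>i j. i \<in> I \<Longrightarrow> j \<in> I \<Longrightarrow> f i \<noteq> 0 \<Longrightarrow> f j \<noteq> 0 \<Longrightarrow> i = j"
    and bound: "\<And>i. i \<in> I \<Longrightarrow> \<bar>f i\<bar> \<le> C" and "0 \<le> C"
  shows "\<bar>\<Sum>i\<in>I. f i\<bar> \<le> C"
proof (cases "\<exists>i\<in>I. f i \<noteq> 0")
  case True
  then obtain i where i: "i \<in> I" "f i \<noteq> 0" by blast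
  have "(\<Sum>j\<in>I. f j) = f i + (\<Sum>j\<in>I - {i}. f j)"
    using i(1) \<open>finite I\<close> by (simp add: sum.remove)
  also have "(\<Sum>j\<in>I - {i}. f j) = 0"
    using unique i by (intro sum.neutral) blast
  finally show ?thesis using bound[OF i(1)] by simp
next
  case False
  then show ?thesis using \<open>0 \<le> C\<close> by simp
qed

definition words :: "nat \<Rightarrow> bool list set" where
  "words K = {bs. length bs = K}"

lemma finite_words: "finite (words K)"
  using finite_lists_length_eq[of "UNIV :: bool set" K] by (simp add: words_def)

lemma card_words: "card (words K) = 2 ^ K"
  using card_lists_length_eq[of "UNIV :: bool set" K] by (simp add: words_def)

lemma sum_words_Suc: "(\<Sum>bs\<in>words (Suc K). f bs) = (\<Sum>bs\<in>words K. f (True # bs) + f (False # bs))"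
proof -
  have "words (Suc K) = (\<lambda>bs. True # bs) ` words K \<union> (\<lambda>bs. False # bs) ` words K"
    by (auto simp: words_def length_Suc_conv image_iff)
  then have "(\<Sum>bs\<in>words (Suc K). f bs)
      = (\<Sum>bs\<in>(\<lambda>bs. True # bs) ` words K \<union> (\<lambda>bs. False # bs) ` words K. f bs)"
    by simp
  also have "\<dots> = (\<Sum>bs\<in>(\<lambda>bs. True # bs) ` words K. f bs) + (\<Sum>bs\<in>(\<lambda>bs. False # bs) ` words K. f bs)"
    by (rule sum.union_disjoint) (auto simp: finite_words)
  also have "\<dots> = (\<Sum>bs\<in>words K. f (True # bs)) + (\<Sum>bs\<in>words K. f (False # bs))"
    by (simp add: sum.reindex)
  finally show ?thesis by (simp add: sum.distrib)
qed

definition child :: "'a::order set \<Rightarrow> 'a \<Rightarrow> bool \<Rightarrow> 'a" where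
  "child \<Gamma> t = (SOME c. \<forall>b. c b \<in> \<Gamma> \<and> t \<le> c b \<and> \<not> c b \<le> c (\<not> b))"

lemma child_spec:
  assumes "ever_branching \<Gamma>" "t \<in> \<Gamma>"
  shows "child \<Gamma> t b \<in> \<Gamma> \<and> t \<le> child \<Gamma> t b \<and> \<not> child \<Gamma> t b \<le> child \<Gamma> t (\<not> b)"
proof -
  obtain x y where "x \<in> \<Gamma>" "y \<in> \<Gamma>" "t \<le> x" "t \<le> y" "\<not> x \<le> y" "\<not> y \<le> x"
    using assms unfolding ever_branching_def totally_ordered_def above_def by blast
  then have "\<exists>c. \<forall>b. c b \<in> \<Gamma> \<and> t \<le> c b \<and> \<not> c b \<le> c (\<not> b)"
    by (intro exI[of _ "\<lambda>b. if b then x else y"]) auto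
  from someI_ex[OF this] show ?thesis unfolding child_def by blast
qed

lemma child_in: "ever_branching \<Gamma> \<Longrightarrow> t \<in> \<Gamma> \<Longrightarrow> child \<Gamma> t b \<in> \<Gamma>"
  using child_spec by blast

lemma le_child: "ever_branching \<Gamma> \<Longrightarrow> t \<in> \<Gamma> \<Longrightarrow> t \<le> child \<Gamma> t b"
  using child_spec by blast

lemma child_incomparable: "ever_branching \<Gamma> \<Longrightarrow> t \<in> \<Gamma> \<Longrightarrow> \<not> child \<Gamma> t b \<le> child \<Gamma> t (\<not> b)"
  using child_spec by blast

text \<open>The nodes of a binary subtree of \<open>\<Gamma>\<close> rooted at \<open>t\<close>; the head of the address \<open>bs\<close>
  is the last step taken.\<close>
primrec node :: "'a::order set \<Rightarrow> 'a \<Rightarrow> bool list \<Rightarrow> 'a" where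
  "node \<Gamma> t [] = t"
| "node \<Gamma> t (b # bs) = child \<Gamma> (node \<Gamma> t bs) b"

context
  fixes \<Gamma> :: "'a::order set" and t :: 'a
  assumes ever_branching: "ever_branching \<Gamma>" and root: "t \<in> \<Gamma>"
begin

lemma node_in: "node \<Gamma> t bs \<in> \<Gamma>"
  by (induction bs) (simp_all add: root child_in[OF ever_branching])

lemma node_le_node_Cons: "node \<Gamma> t bs \<le> node \<Gamma> t (b # bs)"
  by (simp add: le_child[OF ever_branching node_in])

lemma root_le_node: "t \<le> node \<Gamma> t bs"
proof (induction bs)
  case (Cons b bs)
  then show ?case using node_le_node_Cons by (rule order_trans)
qed simp

lemma node_incomparable:
  assumes tree: "is_tree TYPE('a)"
  shows "length bs = length bs' \<Longrightarrow> bs \<noteq> bs' \<Longrightarrow>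
    \<not> node \<Gamma> t bs \<le> node \<Gamma> t bs' \<and> \<not> node \<Gamma> t bs' \<le> node \<Gamma> t bs"
proof (induction bs bs' rule: list_induct2)
  case Nil
  then show ?case by simp
next
  case (Cons b bs b' bs')
  show ?case
  proof (cases "bs = bs'")
    case True
    with Cons.prems have "b' = (\<not> b)" by auto
    with True show ?thesis
      using child_incomparable[OF ever_branching node_in, of bs b]
        child_incomparable[OF ever_branching node_in, of bs "\<not> b"] by simp
  next
    case False
    with Cons.IH have IH: "\<not> node \<Gamma> t bs \<le> node \<Gamma> t bs'" "\<not> node \<Gamma> t bs' \<le> node \<Gamma> t bs"
      by auto
    show ?thesis
    proof (intro conjI notI)
      assume "node \<Gamma> t (b # bs) \<le> node \<Gamma> t (b' # bs')"
      then have "node \<Gamma> t bs \<le> node \<Gamma> t (b' # bs')" by (rule order_trans[OF node_le_node_Cons])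
      with IH show False using tree_below_comparable[OF tree _ node_le_node_Cons] by blast
    next
      assume "node \<Gamma> t (b' # bs') \<le> node \<Gamma> t (b # bs)"
      then have "node \<Gamma> t bs' \<le> node \<Gamma> t (b # bs)" by (rule order_trans[OF node_le_node_Cons])
      with IH show False using tree_below_comparable[OF tree _ node_le_node_Cons] by blast
    qed
  qed
qed

lemma node_le_unique:
  assumes tree: "is_tree TYPE('a)"
    and "bs \<in> words K" "bs' \<in> words K" "node \<Gamma> t bs \<le> r" "node \<Gamma> t bs' \<le> r"
  shows "bs = bs'"
  using node_incomparable[OF tree, of bs bs'] tree_below_comparable[OF tree assms(4,5)] assms(2,3)
  by (auto simp: words_def)

end

section \<open>Branch weights\<close>

text \<open>\<open>dyadic_weight \<Gamma> t K r\<close> is the probability that a random node of depth \<open>K\<close> lies above \<open>r\<close>;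
  its limit \<open>branch_weight\<close> is the probability that a random branch passes through \<open>r\<close>.\<close>
definition dyadic_weight :: "'a::order set \<Rightarrow> 'a \<Rightarrow> nat \<Rightarrow> 'a \<Rightarrow> real" where
  "dyadic_weight \<Gamma> t K r = (\<Sum>bs\<in>words K. of_bool (r \<le> node \<Gamma> t bs)) / 2 ^ K"

definition branch_weight :: "'a::order set \<Rightarrow> 'a \<Rightarrow> 'a \<Rightarrow> real" where
  "branch_weight \<Gamma> t r = (SUP K. dyadic_weight \<Gamma> t K r)"

context
  fixes \<Gamma> :: "'a::order set" and t :: 'a
  assumes tree: "is_tree TYPE('a)" and ever_branching: "ever_branching \<Gamma>" and root: "t \<in> \<Gamma>"
begin

lemma dyadic_weight_Suc_ge: "dyadic_weight \<Gamma> t K r \<le> dyadic_weight \<Gamma> t (Suc K) r"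
proof -
  let ?above = "\<lambda>bs. of_bool (r \<le> node \<Gamma> t bs) :: real"
  have "2 * ?above bs \<le> ?above (True # bs) + ?above (False # bs)" for bs
    using order_trans[OF _ node_le_node_Cons[OF ever_branching root]] by auto
  then have "2 * (\<Sum>bs\<in>words K. ?above bs) \<le> (\<Sum>bs\<in>words (Suc K). ?above bs)"
    unfolding sum_words_Suc sum_distrib_left by (rule sum_mono)
  then show ?thesis by (simp add: dyadic_weight_def field_simps)
qed

lemma dyadic_weight_Suc_le: "dyadic_weight \<Gamma> t (Suc K) r \<le> dyadic_weight \<Gamma> t K r + 1 / 2 ^ K"
proof -
  let ?above = "\<lambda>bs. of_bool (r \<le> node \<Gamma> t bs) :: real"
  let ?below = "\<lambda>bs. of_bool (node \<Gamma> t bs \<le> r) :: real"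
  have "?above (True # bs) + ?above (False # bs) \<le> 2 * ?above bs + 2 * ?below bs" for bs
  proof -
    have "r \<le> node \<Gamma> t bs \<or> node \<Gamma> t bs \<le> r" if "r \<le> node \<Gamma> t (b # bs)" for b
      using tree_below_comparable[OF tree that node_le_node_Cons[OF ever_branching root]] .
    then show ?thesis by (cases "r \<le> node \<Gamma> t bs"; cases "node \<Gamma> t bs \<le> r") auto
  qed
  then have "(\<Sum>bs\<in>words (Suc K). ?above bs) \<le> 2 * (\<Sum>bs\<in>words K. ?above bs) + 2 * (\<Sum>bs\<in>words K. ?below bs)"
    unfolding sum_words_Suc sum_distrib_left sum.distrib[symmetric] by (rule sum_mono)
  moreover have "\<bar>\<Sum>bs\<in>words K. ?below bs\<bar> \<le> 1"
    by (rule abs_sum_le_if_at_most_one_nonzero)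
      (auto simp: finite_words node_le_unique[OF ever_branching root tree])
  ultimately have "(\<Sum>bs\<in>words (Suc K). ?above bs) \<le> 2 * (\<Sum>bs\<in>words K. ?above bs) + 2"
    by linarith
  then show ?thesis by (simp add: dyadic_weight_def field_simps)
qed

lemma dyadic_weight_mono: "K \<le> J \<Longrightarrow> dyadic_weight \<Gamma> t K r \<le> dyadic_weight \<Gamma> t J r"
  by (rule lift_Suc_mono_le[of "\<lambda>K. dyadic_weight \<Gamma> t K r"]) (use dyadic_weight_Suc_ge in auto)

lemma dyadic_weight_le: "dyadic_weight \<Gamma> t J r \<le> dyadic_weight \<Gamma> t K r + 2 / 2 ^ K"
proof (cases "K \<le> J")
  case True
  have "dyadic_weight \<Gamma> t J r \<le> dyadic_weight \<Gamma> t K r + 2 / 2 ^ K - 2 / 2 ^ J"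
    using True
  proof (induction J rule: dec_induct)
    case (step n)
    have "2 / 2 ^ Suc n = (1 / 2 ^ n :: real)" "2 / 2 ^ n = 2 * (1 / 2 ^ n :: real)" by simp_all
    with step.IH show ?case using dyadic_weight_Suc_le[of n r] by linarith
  qed simp
  moreover have "0 \<le> 2 / (2 ^ J :: real)" by simp
  ultimately show ?thesis by linarith
next
  case False
  then have "dyadic_weight \<Gamma> t J r \<le> dyadic_weight \<Gamma> t K r" by (intro dyadic_weight_mono) simp
  moreover have "0 \<le> 2 / (2 ^ K :: real)" by simp
  ultimately show ?thesis by linarith
qed

lemma dyadic_weight_le_branch_weight: "dyadic_weight \<Gamma> t K r \<le> branch_weight \<Gamma> t r"
  unfolding branch_weight_def
proof (rule cSUP_upper)
  show "bdd_above (range (\<lambda>K. dyadic_weight \<Gamma> t K r))"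
    using dyadic_weight_le[of _ r 0] by (intro bdd_aboveI2) simp
qed simp

lemma branch_weight_le: "branch_weight \<Gamma> t r \<le> dyadic_weight \<Gamma> t K r + 2 / 2 ^ K"
  unfolding branch_weight_def by (rule cSUP_least) (auto intro: dyadic_weight_le)

lemma abs_dyadic_weight_minus_branch_weight:
  "\<bar>dyadic_weight \<Gamma> t K r - branch_weight \<Gamma> t r\<bar> \<le> 2 / 2 ^ K"
  using dyadic_weight_le_branch_weight[of K r] branch_weight_le[of r K] by simp

lemma C0_dyadic_weight: "dyadic_weight \<Gamma> t K \<in> C0"
proof -
  have "dyadic_weight \<Gamma> t K = (\<lambda>r. \<Sum>bs\<in>words K. 1 / 2 ^ K * indicator (below (node \<Gamma> t bs)) r)"
    by (auto simp: dyadic_weight_def sum_divide_distrib indicator_def below_def)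
  then show ?thesis by (simp only:) (intro C0_sum C0_scale C0_indicator_below[OF tree])
qed

lemma C0_branch_weight: "branch_weight \<Gamma> t \<in> C0"
proof (rule C0_uniform_limit[OF C0_dyadic_weight])
  show "uniform_limit UNIV (dyadic_weight \<Gamma> t) (branch_weight \<Gamma> t) sequentially"
    unfolding uniform_limit_iff
  proof (intro allI impI)
    fix e :: real assume "e > 0"
    then have "\<forall>\<^sub>F K in sequentially. 2 / 2 ^ K < e"
      using LIMSEQ_divide_realpow_zero[of 2 2] by (auto dest: order_tendstoD(2))
    then show "\<forall>\<^sub>F K in sequentially. \<forall>r\<in>UNIV. dist (dyadic_weight \<Gamma> t K r) (branch_weight \<Gamma> t r) < e"
    proof (rule eventually_mono)
      fix K :: nat assume "2 / 2 ^ K < e"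
      then show "\<forall>r\<in>UNIV. dist (dyadic_weight \<Gamma> t K r) (branch_weight \<Gamma> t r) < e"
        using abs_dyadic_weight_minus_branch_weight[of K] by (auto simp: dist_real_def intro: le_less_trans)
    qed
  qed
qed

lemma dyadic_weight_const:
  assumes "\<And>bs. (r \<le> node \<Gamma> t bs) = P"
  shows "dyadic_weight \<Gamma> t K r = of_bool P"
  using assms by (simp add: dyadic_weight_def card_words)

lemma admissible_branch_weight: "admissible t (branch_weight \<Gamma> t)"
  unfolding admissible_def
proof (intro conjI allI impI)
  show "branch_weight \<Gamma> t \<in> C0" by (rule C0_branch_weight)
next
  fix r assume "r \<le> t"
  then have "r \<le> node \<Gamma> t bs" for bs using root_le_node[OF ever_branching root] by (rule order_trans)
  then show "branch_weight \<Gamma> t r = 1"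
    by (simp add: branch_weight_def dyadic_weight_const[of r True])
next
  fix r assume r: "\<not> r \<le> t \<and> \<not> t < r"
  have "\<not> r \<le> node \<Gamma> t bs" for bs
  proof
    assume "r \<le> node \<Gamma> t bs"
    with tree_below_comparable[OF tree this root_le_node[OF ever_branching root]] r show False
      by (auto simp: order.order_iff_strict)
  qed
  then show "branch_weight \<Gamma> t r = 0"
    by (simp add: branch_weight_def dyadic_weight_const[of r False])
qed

lemma abs_average_minus_dyadic_weight_le:
  assumes admissible: "\<And>bs. admissible (node \<Gamma> t bs) (g bs)" and bound: "\<And>bs s. \<bar>g bs s\<bar> \<le> C"
  shows "\<bar>(\<Sum>bs\<in>words K. g bs r) / 2 ^ K - dyadic_weight \<Gamma> t K r\<bar> \<le> C / 2 ^ K"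
proof -
  let ?d = "\<lambda>bs. g bs r - of_bool (r \<le> node \<Gamma> t bs)"
  have vanish: "?d bs = 0" if "\<not> node \<Gamma> t bs \<le> r" for bs
    using admissible[of bs] that by (cases "r \<le> node \<Gamma> t bs") (auto simp: admissible_def less_le_not_le)
  have "\<bar>?d bs\<bar> \<le> C" for bs
    using bound[of bs r] admissible[of bs] by (cases "r \<le> node \<Gamma> t bs") (auto simp: admissible_def)
  moreover have "0 \<le> C" using abs_ge_zero bound by (rule order_trans)
  ultimately have "\<bar>\<Sum>bs\<in>words K. ?d bs\<bar> \<le> C"
    using vanish node_le_unique[OF ever_branching root tree]
    by (intro abs_sum_le_if_at_most_one_nonzero[OF finite_words]) blast+
  moreover have "(\<Sum>bs\<in>words K. g bs r) / 2 ^ K - dyadic_weight \<Gamma> t K r = (\<Sum>bs\<in>words K. ?d bs) / 2 ^ K"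
    by (simp add: dyadic_weight_def sum_subtractf diff_divide_distrib)
  ultimately show ?thesis by (simp add: divide_right_mono)
qed

text \<open>Half of the branches pass through \<open>child \<Gamma> t False\<close>, and these avoid \<open>child \<Gamma> t True\<close>.\<close>
lemma branch_weight_at_child: "branch_weight \<Gamma> t (child \<Gamma> t True) \<le> 1 / 2"
  unfolding branch_weight_def
proof (rule cSUP_least)
  fix K
  let ?l = "child \<Gamma> t True" and ?m = "child \<Gamma> t False"
  have no_common_upper: "\<not> (?l \<le> node \<Gamma> t bs \<and> ?m \<le> node \<Gamma> t bs)" for bs
    using tree_below_comparable[OF tree, of ?l "node \<Gamma> t bs" ?m]
      child_incomparable[OF ever_branching root, of True] child_incomparable[OF ever_branching root, of False]
    by auto
  have "dyadic_weight \<Gamma> t (Suc K) ?l + dyadic_weight \<Gamma> t (Suc K) ?m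
      = (\<Sum>bs\<in>words (Suc K). of_bool (?l \<le> node \<Gamma> t bs) + of_bool (?m \<le> node \<Gamma> t bs)) / 2 ^ Suc K"
    by (simp add: dyadic_weight_def sum.distrib add_divide_distrib)
  also have "\<dots> \<le> (\<Sum>bs\<in>words (Suc K). 1) / 2 ^ Suc K"
    using no_common_upper by (intro divide_right_mono sum_mono) auto
  also have "\<dots> = 1" by (simp add: card_words)
  finally have "dyadic_weight \<Gamma> t (Suc K) ?l + dyadic_weight \<Gamma> t (Suc K) ?m \<le> 1" .
  moreover have "1 / 2 \<le> dyadic_weight \<Gamma> t (Suc 0) ?m"
  proof -
    have "words 0 = {[]}" by (simp add: words_def)
    then show ?thesis by (simp add: dyadic_weight_def sum_words_Suc)
  qed
  moreover have "dyadic_weight \<Gamma> t (Suc 0) ?m \<le> dyadic_weight \<Gamma> t (Suc K) ?m"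
    by (rule dyadic_weight_mono) simp
  moreover have "dyadic_weight \<Gamma> t K ?l \<le> dyadic_weight \<Gamma> t (Suc K) ?l"
    by (rule dyadic_weight_Suc_ge)
  ultimately show "dyadic_weight \<Gamma> t K ?l \<le> 1 / 2" by linarith
qed simp

end

section \<open>Equivalent strictly convex norms\<close>

lemma le_of_le_add_div_pow:
  fixes x y D :: real
  assumes "\<And>K::nat. x \<le> y + D / 2 ^ K"
  shows "x \<le> y"
proof (rule LIMSEQ_le_const)
  show "(\<lambda>K. y + D / 2 ^ K) \<longlonglongrightarrow> y"
    using tendsto_add[OF tendsto_const LIMSEQ_divide_realpow_zero[of 2 D]] by simp
qed (use assms in blast)

locale C0_equivalent_norm =
  fixes N :: "('a::order \<Rightarrow> real) \<Rightarrow> real" and a b :: real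
  assumes tree: "is_tree TYPE('a)" and norm: "norm_on_C0 N"
    and a_pos: "0 < a" and b_pos: "0 < b"
    and norm_bounds: "\<And>f. f \<in> C0 \<Longrightarrow> a * sup_norm f \<le> N f \<and> N f \<le> b * sup_norm f"
begin

lemma norm_nonneg: "f \<in> C0 \<Longrightarrow> 0 \<le> N f"
  using norm unfolding norm_on_C0_def by blast

lemma norm_scale: "f \<in> C0 \<Longrightarrow> N (\<lambda>s. c * f s) = \<bar>c\<bar> * N f"
  using norm unfolding norm_on_C0_def by blast

lemma norm_triangle: "f \<in> C0 \<Longrightarrow> g \<in> C0 \<Longrightarrow> N (\<lambda>s. f s + g s) \<le> N f + N g"
  using norm unfolding norm_on_C0_def by blast

lemma norm_sum:
  assumes "\<And>i. i \<in> I \<Longrightarrow> f i \<in> C0"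
  shows "N (\<lambda>s. \<Sum>i\<in>I. f i s) \<le> (\<Sum>i\<in>I. N (f i))"
  using assms
proof (induction I rule: infinite_finite_induct)
  case (insert i I)
  then have "N (\<lambda>s. f i s + (\<Sum>i\<in>I. f i s)) \<le> N (f i) + N (\<lambda>s. \<Sum>i\<in>I. f i s)"
    by (intro norm_triangle C0_sum) auto
  with insert show ?case by simp
qed (use norm C0_zero in \<open>auto simp: norm_on_C0_def\<close>)

lemma abs_le_norm:
  assumes "f \<in> C0"
  shows "\<bar>f s\<bar> \<le> N f / a"
proof -
  have "a * \<bar>f s\<bar> \<le> a * sup_norm f"
    using abs_le_sup_norm[OF assms, of s] less_imp_le[OF a_pos] by (rule mult_left_mono)
  also have "\<dots> \<le> N f" using norm_bounds[OF assms] by blast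
  finally show ?thesis using a_pos by (simp add: pos_le_divide_eq mult.commute)
qed

lemma mu_le_admissible: "admissible t h \<Longrightarrow> mu N t \<le> N h"
  unfolding mu_eq_Inf_admissible[OF tree]
  by (rule cInf_lower) (auto intro!: bdd_belowI[of _ 0] norm_nonneg simp: admissible_def)

lemma admissible_near_mu:
  assumes "0 < e"
  obtains h where "admissible t h" "N h < mu N t + e"
proof -
  have "N ` {h. admissible t h} \<noteq> {}" using admissible_indicator_below[OF tree] by blast
  then obtain v where "v \<in> N ` {h. admissible t h}" "v < mu N t + e"
    using cInf_lessD[of "N ` {h. admissible t h}" "mu N t + e"] assms
    unfolding mu_eq_Inf_admissible[OF tree] by auto
  then show thesis using that by blast
qed

lemma eq_if_norm_midpoint_ge:
  assumes "strictly_convex_on_C0 N" "x \<in> C0" "y \<in> C0" "N x \<le> c" "N y \<le> c"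
    and "c \<le> N (\<lambda>s. (x s + y s) / 2)"
  shows "x = y"
proof -
  have "N (\<lambda>s. (x s + y s) / 2) = N (\<lambda>s. x s + y s) / 2"
    using norm_scale[OF C0_add[OF assms(2,3)], of "1/2"] by simp
  then have "N x = N y \<and> N y = N (\<lambda>s. x s + y s) / 2"
    using norm_triangle[OF assms(2,3)] assms(4-6) by linarith
  with assms(1-3) show ?thesis unfolding strictly_convex_on_C0_def by blast
qed

lemma norm_average_le:
  assumes "finite I" "I \<noteq> {}" "\<And>i. i \<in> I \<Longrightarrow> f i \<in> C0" "\<And>i. i \<in> I \<Longrightarrow> N (f i) \<le> M"
  shows "N (\<lambda>s. (\<Sum>i\<in>I. f i s) / card I) \<le> M"
proof -
  have "N (\<lambda>s. (\<Sum>i\<in>I. f i s) / card I) = N (\<lambda>s. \<Sum>i\<in>I. f i s) / card I"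
    using norm_scale[OF C0_sum[OF assms(3)], where c = "1 / real (card I)"] by simp
  also have "\<dots> \<le> (\<Sum>i\<in>I. N (f i)) / card I"
    using norm_sum[of I f] assms(3) by (simp add: divide_right_mono)
  also have "\<dots> \<le> (\<Sum>i\<in>I. M) / card I"
    using assms(4) by (intro divide_right_mono sum_mono) auto
  also have "\<dots> = M" using assms(1,2) by simp
  finally show ?thesis .
qed

text \<open>Averaging admissible functions over the nodes of depth \<open>K\<close> gives a function of norm
  at most \<open>M\<close> that is uniformly \<open>O(2\<^sup>-\<^sup>K)\<close>-close to \<open>branch_weight\<close>.\<close>
lemma norm_branch_weight_le_approx:
  assumes ever_branching: "ever_branching \<Gamma>" and root: "t \<in> \<Gamma>"
    and g: "\<And>u. u \<in> \<Gamma> \<Longrightarrow> admissible u (g u) \<and> N (g u) \<le> M"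
  shows "N (branch_weight \<Gamma> t) \<le> M + b * (M / a + 2) / 2 ^ K"
proof -
  have g_adm: "admissible (node \<Gamma> t bs) (g (node \<Gamma> t bs))" and g_norm: "N (g (node \<Gamma> t bs)) \<le> M" for bs
    using g[OF node_in[OF ever_branching root]] by auto
  have g_C0: "g (node \<Gamma> t bs) \<in> C0" for bs using g_adm by (simp add: admissible_def)
  have g_bound: "\<bar>g (node \<Gamma> t bs) s\<bar> \<le> M / a" for bs s
    using order_trans[OF abs_le_norm[OF g_C0] divide_right_mono[OF g_norm less_imp_le[OF a_pos]]] .
  let ?x = "\<lambda>r. (\<Sum>bs\<in>words K. g (node \<Gamma> t bs) r) / 2 ^ K"
  have x_C0: "?x \<in> C0" using C0_scale[OF C0_sum[OF g_C0], of "1 / 2 ^ K"] by simp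
  have "words K \<noteq> {}" using card_words[of K] by auto
  then have "N (\<lambda>r. (\<Sum>bs\<in>words K. g (node \<Gamma> t bs) r) / card (words K)) \<le> M"
    by (rule norm_average_le[OF finite_words _ g_C0 g_norm])
  then have x_norm: "N ?x \<le> M" by (simp add: card_words)
  let ?d = "\<lambda>r. branch_weight \<Gamma> t r - ?x r"
  have d_C0: "?d \<in> C0" by (rule C0_diff[OF C0_branch_weight[OF tree ever_branching root] x_C0])
  have "\<bar>?d r\<bar> \<le> (M / a + 2) / 2 ^ K" for r
  proof -
    have "\<bar>?x r - dyadic_weight \<Gamma> t K r\<bar> \<le> (M / a) / 2 ^ K"
      by (rule abs_average_minus_dyadic_weight_le[OF tree ever_branching root g_adm g_bound])
    moreover have "\<bar>dyadic_weight \<Gamma> t K r - branch_weight \<Gamma> t r\<bar> \<le> 2 / 2 ^ K"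
      by (rule abs_dyadic_weight_minus_branch_weight[OF tree ever_branching root])
    ultimately show ?thesis by (simp add: add_divide_distrib)
  qed
  then have "sup_norm ?d \<le> (M / a + 2) / 2 ^ K" by (rule sup_norm_le)
  then have "b * sup_norm ?d \<le> b * ((M / a + 2) / 2 ^ K)"
    using less_imp_le[OF b_pos] by (rule mult_left_mono)
  then have "N ?d \<le> b * (M / a + 2) / 2 ^ K" using norm_bounds[OF d_C0] by simp
  moreover have "N (branch_weight \<Gamma> t) \<le> N ?x + N ?d"
    using norm_triangle[OF x_C0 d_C0] by simp
  ultimately show ?thesis using x_norm by linarith
qed

lemma norm_branch_weight_le:
  assumes ever_branching: "ever_branching \<Gamma>" and root: "t \<in> \<Gamma>" and mu_le: "\<And>u. u \<in> \<Gamma> \<Longrightarrow> mu N u \<le> c"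
  shows "N (branch_weight \<Gamma> t) \<le> c"
proof (rule field_le_epsilon)
  fix e :: real assume "0 < e"
  have "\<exists>h. admissible u h \<and> N h \<le> c + e" if "u \<in> \<Gamma>" for u
  proof -
    obtain h where h: "admissible u h" "N h < mu N u + e" by (rule admissible_near_mu[OF \<open>0 < e\<close>])
    with mu_le[OF that] show ?thesis by (intro exI[of _ h]) simp
  qed
  then have "\<forall>u. \<exists>h. u \<in> \<Gamma> \<longrightarrow> admissible u h \<and> N h \<le> c + e" by blast
  from choice[OF this] obtain g where g: "\<forall>u. u \<in> \<Gamma> \<longrightarrow> admissible u (g u) \<and> N (g u) \<le> c + e" ..
  have "N (branch_weight \<Gamma> t) \<le> (c + e) + b * ((c + e) / a + 2) / 2 ^ K" for K
    by (rule norm_branch_weight_le_approx[OF ever_branching root]) (use g in blast)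
  then show "N (branch_weight \<Gamma> t) \<le> c + e" by (rule le_of_le_add_div_pow)
qed

theorem mu_not_constant_on_ever_branching:
  assumes "strictly_convex_on_C0 N" and ever_branching: "ever_branching \<Gamma>"
  shows "\<not> (\<forall>t\<in>\<Gamma>. mu N t = c)"
proof
  assume const: "\<forall>t\<in>\<Gamma>. mu N t = c"
  obtain t where root: "t \<in> \<Gamma>" using ever_branching unfolding ever_branching_def by blast
  let ?l = "child \<Gamma> t True"
  have l: "?l \<in> \<Gamma>" "t \<le> ?l" using child_in le_child ever_branching root by blast+
  let ?x = "branch_weight \<Gamma> t" and ?y = "branch_weight \<Gamma> ?l"
  have x: "admissible t ?x" and y: "admissible ?l ?y"
    using admissible_branch_weight tree ever_branching root l(1) by blast+
  have "c \<le> N (\<lambda>s. (?x s + ?y s) / 2)"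
    using mu_le_admissible[OF admissible_midpoint[OF tree x y l(2)]] const root by simp
  moreover have "N ?x \<le> c" "N ?y \<le> c"
    using norm_branch_weight_le[OF ever_branching] const root l(1) by auto
  ultimately have "?x = ?y"
    using eq_if_norm_midpoint_ge[OF assms(1)] x y by (simp add: admissible_def)
  moreover have "?y ?l = 1" using y by (simp add: admissible_def)
  moreover have "?x ?l \<le> 1 / 2" by (rule branch_weight_at_child[OF tree ever_branching root])
  ultimately show False by simp
qed

end

theorem proposition3p4:
  fixes N :: "('a::order \<Rightarrow> real) \<Rightarrow> real" and \<Gamma> :: "'a set"
  assumes "is_tree TYPE('a)"
    and "equivalent_norm_on_C0 N"
    and "strictly_convex_on_C0 N"
    and "ever_branching \<Gamma>"
  shows "\<not> (\<exists>c. \<forall>t\<in>\<Gamma>. mu N t = c)"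
proof -
  obtain a b where "C0_equivalent_norm N a b"
    using assms(1,2) unfolding equivalent_norm_on_C0_def C0_equivalent_norm_def by blast
  then show ?thesis using C0_equivalent_norm.mu_not_constant_on_ever_branching assms(3,4) by blast
qed

end
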